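(* Assume the setting below, and let $\gamma=\sup_{W_1\in V_{1,H},W_2\in V_{2,H}}\frac{(T_1W_1,T_2W_2)}{\|T_1W_1\|\,\|T_2W_2\|}$ (with $\|\cdot\|$ the $L^2(\Omega)$ norm), assumed to lie in $(0,1)$. If $$\tau^2\le 2(1-\gamma^2)\inf_{W\in V_{2,H}}\frac{\|W\|_{m_{22}}^2}{\|W\|_{a_{22}}^2+\|W\|_{c_{22}}^2},$$ then discretization scheme 2 is stable, i.e. it admits a discrete energy that is conserved from one time step to the next and is nonnegative.
   Context: Let $\Omega\subset\mathbb{R}^d$ be bounded, $\kappa>0$ a coefficient, $a(u,v)=\int_\Omega\kappa\nabla u\cdot\nabla v$, and $(\cdot,\cdot)$ the $L^2(\Omega)$ inner product. $V_{1,H},V_{2,H}$ are finite-dimensional spaces (in the paper $V_{j,H}=\prod_{k\in I_j}V_H$ for a coarse finite element space $V_H$ and a partition $I_1\sqcup I_2$ of the continua indices), with linear maps $T_{j,0},T_{j,1}$ on $V_{j,H}$ and $T_j=T_{j,0}+T_{j,1}$ (in the paper, $T_{j,0}U=\sum_K\mathbf{1}_K\sum_{k\in I_j}\phi_k^KU_k$, $T_{j,1}U=\sum_K\mathbf{1}_K\sum_{k\in I_j}\sum_m\phi_k^{K,m}\partial_{x_m}U_k$ with fixed multiscale basis functions). Bilinear forms: $m_{ij}(U,W)=(T_jU,T_iW)$, $a_{ij}(U,W)=a(T_{j,1}U,T_{i,1}W)$, $c_{ij}(U,W)=a(T_{j,0}U,T_{i,0}W)$ for $U\in V_{j,H},W\in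 V_{i,H}$; $\|W\|_{x_{22}}^2=x_{22}(W,W)$ for $x\in\{m,a,c\}$. Discretization scheme 2 (with zero source, as assumed in the paper's stability analysis), time step $\tau>0$: for $n\ge1$, for all $W_1\in V_{1,H}$, $\tfrac{1}{\tau^2} m_{11}(U_1^{n+1}-2U_1^n+U_1^{n-1},W_1)+\tfrac{1}{\tau^2} m_{12}(U_2^{n+1}-2U_2^n+U_2^{n-1},W_1)+\tfrac12 a_{11}(U_1^{n+1}+U_1^{n-1},W_1)+a_{12}(U_2^n,W_1)+\tfrac12 c_{11}(U_1^{n+1}+U_1^{n-1},W_1)+c_{12}(U_2^n,W_1)=0$, and for all $W_2\in V_{2,H}$, $\tfrac{1}{\tau^2} m_{22}(U_2^{n+1}-2U_2^n+U_2^{n-1},W_2)+\tfrac{1}{\tau^2} m_{21}(U_1^{n+1}-2U_1^n+U_1^{n-1},W_2)+a_{21}(U_1^n,W_2)+a_{22}(U_2^n,W_2)+c_{21}(U_1^n,W_2)+c_{22}(U_2^n,W_2)=0$. The infimum is over nonzero $W$. *)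

theory Defs
  imports "HOL-Analysis.Analysis"
begin

text \<open>The type 'h plays the role of L^2(Omega) (a real inner product
space, inner product = L^2 inner product), the bilinear form a(u,v) = int kappa grad u . grad v
is an abstract symmetric, positive semidefinite bilinear form on 'h.  The coarse spaces
V_{1,H}, V_{2,H} are finite-dimensional real vector spaces (euclidean_space types), and
T_{j,0}, T_{j,1} are linear maps into 'h, T_j = T_{j,0} + T_{j,1}.\<close>

text \<open>Generic form B(S U, R W): with B = inner, S = T_j, R = T_i this is m_ij(U,W);
with B = a, S = T_{j,1}, R = T_{i,1} it is a_ij(U,W); with B = a, S = T_{j,0}, R = T_{i,0}
it is c_ij(U,W).\<close>
definition bform :: "('h \<Rightarrow> 'h \<Rightarrow> real) \<Rightarrow> ('v \<Rightarrow> 'h) \<Rightarrow> ('w \<Rightarrow> 'h) \<Rightarrow> 'v \<Rightarrow> 'w \<Rightarrow> real" where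
  "bform B S R U W = B (S U) (R W)"

definition gamma_const :: "('v1 \<Rightarrow> 'h::real_inner) \<Rightarrow> ('v2 \<Rightarrow> 'h) \<Rightarrow> real" where
  "gamma_const T1 T2 = Sup {inner (T1 W1) (T2 W2) / (norm (T1 W1) * norm (T2 W2)) | W1 W2.
                               T1 W1 \<noteq> 0 \<and> T2 W2 \<noteq> 0}"

text \<open>Discretization scheme 2 (zero source), for all n >= 1.\<close>
definition scheme2 ::
  "('h::real_inner \<Rightarrow> 'h \<Rightarrow> real) \<Rightarrow> ('v1::real_vector \<Rightarrow> 'h) \<Rightarrow> ('v1 \<Rightarrow> 'h)
    \<Rightarrow> ('v2::real_vector \<Rightarrow> 'h) \<Rightarrow> ('v2 \<Rightarrow> 'h) \<Rightarrow> real
    \<Rightarrow> (nat \<Rightarrow> 'v1) \<Rightarrow> (nat \<Rightarrow> 'v2) \<Rightarrow> bool" where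
  "scheme2 a T10 T11 T20 T21 \<tau> U1 U2 \<longleftrightarrow>
    (let T1 = (\<lambda>U. T10 U + T11 U); T2 = (\<lambda>U. T20 U + T21 U) in
     \<forall>n\<ge>1.
      (\<forall>W1.
         1 / \<tau>^2 * bform inner T1 T1 (U1 (n+1) - 2 *\<^sub>R U1 n + U1 (n-1)) W1
       + 1 / \<tau>^2 * bform inner T2 T1 (U2 (n+1) - 2 *\<^sub>R U2 n + U2 (n-1)) W1
       + 1/2 * bform a T11 T11 (U1 (n+1) + U1 (n-1)) W1
       + bform a T21 T11 (U2 n) W1
       + 1/2 * bform a T10 T10 (U1 (n+1) + U1 (n-1)) W1
       + bform a T20 T10 (U2 n) W1 = 0)
    \<and> (\<forall>W2.
         1 / \<tau>^2 * bform inner T2 T2 (U2 (n+1) - 2 *\<^sub>R U2 n + U2 (n-1)) W2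
       + 1 / \<tau>^2 * bform inner T1 T2 (U1 (n+1) - 2 *\<^sub>R U1 n + U1 (n-1)) W2
       + bform a T11 T21 (U1 n) W2
       + bform a T21 T21 (U2 n) W2
       + bform a T10 T20 (U1 n) W2
       + bform a T20 T20 (U2 n) W2 = 0))"

definition energy2 ::
  "('h::real_inner \<Rightarrow> 'h \<Rightarrow> real) \<Rightarrow> ('v1::real_vector \<Rightarrow> 'h) \<Rightarrow> ('v1 \<Rightarrow> 'h)
    \<Rightarrow> ('v2::real_vector \<Rightarrow> 'h) \<Rightarrow> ('v2 \<Rightarrow> 'h) \<Rightarrow> real
    \<Rightarrow> (nat \<Rightarrow> 'v1) \<Rightarrow> (nat \<Rightarrow> 'v2) \<Rightarrow> nat \<Rightarrow> real" where
  "energy2 a T10 T11 T20 T21 \<tau> U1 U2 n =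
    (let T1 = (\<lambda>U. T10 U + T11 U); T2 = (\<lambda>U. T20 U + T21 U);
         D1 = U1 (n+1) - U1 n; D2 = U2 (n+1) - U2 n;
         k11 = (\<lambda>U W. bform a T11 T11 U W + bform a T10 T10 U W);
         k12 = (\<lambda>U W. bform a T21 T11 U W + bform a T20 T10 U W);
         k22 = (\<lambda>U W. bform a T21 T21 U W + bform a T20 T20 U W)
     in 1 / \<tau>^2 * (bform inner T1 T1 D1 D1 + bform inner T2 T1 D2 D1
                    + bform inner T1 T2 D1 D2 + bform inner T2 T2 D2 D2)
      + 1/2 * (k11 (U1 (n+1)) (U1 (n+1)) + k11 (U1 n) (U1 n))
      + k12 (U2 n) (U1 (n+1)) + k12 (U2 (n+1)) (U1 n)
      + k22 (U2 n) (U2 (n+1)))"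

end

(* Testing the two equations of the scheme with the central differences U^{n+1} - U^{n-1} and
   adding them, the mass terms become a second difference paired with a central difference, i.e.
   a difference of squared norms of consecutive forward differences, and the stiffness terms
   telescope into a staggered energy (U_1 at levels n+1, n and U_2 at levels n, n+1); hence the
   energy is conserved.  Completing squares, the staggered energy is at least -1/2 k_22(D_2) with
   D_2 = U_2^{n+1} - U_2^n.  The CFL condition bounds this by (1 - gamma^2) tau^-2 |T_2 D_2|^2, and
   the strengthened Cauchy-Schwarz inequality bounds that in turn by the kinetic part
   tau^-2 |T_1 D_1 + T_2 D_2|^2 of the energy. *)

theory Submission
  imports Defs
begin

(* For (S, R) = (T_{1,1}, T_{2,1}) or (T_{1,0}, T_{2,0}), the arguments s', s, r, r' stand for
   S U_1^{n+1}, S U_1^n, R U_2^n and R U_2^{n+1}. *)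
definition staggered_energy :: "('h \<Rightarrow> 'h \<Rightarrow> real) \<Rightarrow> 'h \<Rightarrow> 'h \<Rightarrow> 'h \<Rightarrow> 'h \<Rightarrow> real" where
  "staggered_energy b s' s r r' = 1/2 * (b s' s' + b s s) + b r s' + b r' s + b r r'"

lemma staggered_energy_diff:
  fixes b :: "'h::real_vector \<Rightarrow> 'h \<Rightarrow> real"
  assumes b: "bilinear b" and b_sym: "\<And>x y. b x y = b y x"
  shows "staggered_energy b s2 s1 r1 r2 - staggered_energy b s1 s0 r0 r1
    = 1/2 * b (s2 + s0) (s2 - s0) + b r1 (s2 - s0) + b s1 (r2 - r0) + b r1 (r2 - r0)"
  using b_sym[of s0 s2] b_sym[of s1 r2] b_sym[of s1 r0] b_sym[of r1 r0]
  by (simp add: staggered_energy_def bilinear_ladd[OF b] bilinear_radd[OF b]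
      bilinear_lsub[OF b] bilinear_rsub[OF b] algebra_simps)

lemma staggered_energy_eq:
  fixes b :: "'h::real_vector \<Rightarrow> 'h \<Rightarrow> real"
  assumes b: "bilinear b" and b_sym: "\<And>x y. b x y = b y x"
  shows "staggered_energy b s' s r r'
    = 1/2 * b (s' + r) (s' + r) + 1/2 * b (s + r') (s + r') - 1/2 * b (r' - r) (r' - r)"
  using b_sym[of s' r] b_sym[of s r'] b_sym[of r' r]
  by (simp add: staggered_energy_def bilinear_ladd[OF b] bilinear_radd[OF b]
      bilinear_lsub[OF b] bilinear_rsub[OF b] algebra_simps)

lemma staggered_energy_ge:
  fixes b :: "'h::real_vector \<Rightarrow> 'h \<Rightarrow> real"
  assumes "bilinear b" and "\<And>x y. b x y = b y x" and b_nonneg: "\<And>x. b x x \<ge> 0"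
  shows "- 1/2 * b (r' - r) (r' - r) \<le> staggered_energy b s' s r r'"
  using b_nonneg[of "s' + r"] b_nonneg[of "s + r'"]
  by (simp add: staggered_energy_eq[OF assms(1,2)])

lemma inner_second_difference:
  fixes x0 x1 x2 :: "'h::real_inner"
  shows "inner (x2 - 2 *\<^sub>R x1 + x0) (x2 - x0) = (norm (x2 - x1))\<^sup>2 - (norm (x1 - x0))\<^sup>2"
  by (simp add: power2_norm_eq_inner inner_add_left inner_add_right inner_diff_left
      inner_diff_right inner_commute algebra_simps)

lemma mass_central_difference:
  fixes T1 :: "'v1::real_vector \<Rightarrow> 'h::real_inner" and T2 :: "'v2::real_vector \<Rightarrow> 'h"
  assumes T1: "linear T1" and T2: "linear T2"
  shows "bform inner T1 T1 (u_next - 2 *\<^sub>R u + u_prev) (u_next - u_prev)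
      + bform inner T2 T1 (v_next - 2 *\<^sub>R v + v_prev) (u_next - u_prev)
      + bform inner T2 T2 (v_next - 2 *\<^sub>R v + v_prev) (v_next - v_prev)
      + bform inner T1 T2 (u_next - 2 *\<^sub>R u + u_prev) (v_next - v_prev)
    = (norm (T1 (u_next - u) + T2 (v_next - v)))\<^sup>2 - (norm (T1 (u - u_prev) + T2 (v - v_prev)))\<^sup>2"
    (is "?lhs = _")
proof -
  define p where "p x y = T1 x + T2 y" for x y
  have linear_p: "T1 (x - 2 *\<^sub>R x' + x'') + T2 (y - 2 *\<^sub>R y' + y'') = p x y - 2 *\<^sub>R p x' y' + p x'' y''"
    "T1 (x - x') + T2 (y - y') = p x y - p x' y'" for x x' x'' y y' y''
    using T1 T2 by (simp_all add: p_def linear_add linear_diff linear_scale algebra_simps)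
  have "?lhs = inner (T1 (u_next - 2 *\<^sub>R u + u_prev) + T2 (v_next - 2 *\<^sub>R v + v_prev))
      (T1 (u_next - u_prev) + T2 (v_next - v_prev))"
    by (simp add: bform_def inner_add_left inner_add_right ac_simps)
  also have "\<dots> = (norm (p u_next v_next - p u v))\<^sup>2 - (norm (p u v - p u_prev v_prev))\<^sup>2"
    unfolding linear_p by (rule inner_second_difference)
  finally show ?thesis
    unfolding linear_p .
qed

lemma stiffness_central_difference:
  fixes b :: "'h::real_vector \<Rightarrow> 'h \<Rightarrow> real"
    and S :: "'v1::real_vector \<Rightarrow> 'h" and R :: "'v2::real_vector \<Rightarrow> 'h"
  assumes "bilinear b" and "\<And>x y. b x y = b y x" and S: "linear S" and R: "linear R"
  shows "1/2 * bform b S S (u_next + u_prev) (u_next - u_prev) + bform b R S v (u_next - u_prev)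
      + bform b S R u (v_next - v_prev) + bform b R R v (v_next - v_prev)
    = staggered_energy b (S u_next) (S u) (R v) (R v_next)
      - staggered_energy b (S u) (S u_prev) (R v_prev) (R v)"
  by (simp add: staggered_energy_diff[OF assms(1,2)] bform_def linear_add[OF S] linear_diff[OF S]
      linear_diff[OF R])

lemma energy2_eq:
  fixes a :: "'h::real_inner \<Rightarrow> 'h \<Rightarrow> real"
    and T10 T11 :: "'v1::real_vector \<Rightarrow> 'h" and T20 T21 :: "'v2::real_vector \<Rightarrow> 'h"
    and U1 :: "nat \<Rightarrow> 'v1" and U2 :: "nat \<Rightarrow> 'v2" and n :: nat
  defines "D1 \<equiv> U1 (n + 1) - U1 n" and "D2 \<equiv> U2 (n + 1) - U2 n"
  shows "energy2 a T10 T11 T20 T21 \<tau> U1 U2 n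
    = 1 / \<tau>\<^sup>2 * (norm ((T10 D1 + T11 D1) + (T20 D2 + T21 D2)))\<^sup>2
    + staggered_energy a (T11 (U1 (n + 1))) (T11 (U1 n)) (T21 (U2 n)) (T21 (U2 (n + 1)))
    + staggered_energy a (T10 (U1 (n + 1))) (T10 (U1 n)) (T20 (U2 n)) (T20 (U2 (n + 1)))"
proof -
  have norm_add: "(norm (x + y))\<^sup>2 = inner x x + inner y x + inner x y + inner y y" for x y :: 'h
    by (simp add: power2_norm_eq_inner inner_add_left inner_add_right)
  show ?thesis
    unfolding energy2_def Let_def bform_def staggered_energy_def norm_add
      D1_def[symmetric] D2_def[symmetric]
    by argo
qed

lemma energy2_Suc:
  fixes a :: "'h::real_inner \<Rightarrow> 'h \<Rightarrow> real"
    and T10 T11 :: "'v1::real_vector \<Rightarrow> 'h" and T20 T21 :: "'v2::real_vector \<Rightarrow> 'h"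
    and U1 :: "nat \<Rightarrow> 'v1" and U2 :: "nat \<Rightarrow> 'v2"
  assumes a: "bilinear a" and a_sym: "\<And>u v. a u v = a v u"
    and lin: "linear T10" "linear T11" "linear T20" "linear T21"
    and scheme: "scheme2 a T10 T11 T20 T21 \<tau> U1 U2"
  shows "energy2 a T10 T11 T20 T21 \<tau> U1 U2 (Suc n) = energy2 a T10 T11 T20 T21 \<tau> U1 U2 n"
proof -
  have idx: "Suc n + 1 = Suc (Suc n)" "Suc n - 1 = n" "1 \<le> Suc n"
    by simp_all
  note step = scheme[unfolded scheme2_def Let_def, rule_format, OF idx(3), unfolded idx(1,2)]
  note test1 = step[THEN conjunct1, rule_format, of "U1 (Suc (Suc n)) - U1 n"]
  note test2 = step[THEN conjunct2, rule_format, of "U2 (Suc (Suc n)) - U2 n"]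
  note mass = mass_central_difference[OF linear_compose_add[OF lin(1,2)] linear_compose_add[OF lin(3,4)],
      where u_next = "U1 (Suc (Suc n))" and u = "U1 (Suc n)" and u_prev = "U1 n"
        and v_next = "U2 (Suc (Suc n))" and v = "U2 (Suc n)" and v_prev = "U2 n",
      THEN arg_cong[where f = "\<lambda>x. 1 / \<tau>\<^sup>2 * x"], unfolded distrib_left right_diff_distrib]
  note stiffness = stiffness_central_difference[OF a a_sym,
      where u_next = "U1 (Suc (Suc n))" and u = "U1 (Suc n)" and u_prev = "U1 n"
        and v_next = "U2 (Suc (Suc n))" and v = "U2 (Suc n)" and v_prev = "U2 n"]
  show ?thesis
    using energy2_eq[of a T10 T11 T20 T21 \<tau> U1 U2 n] energy2_eq[of a T10 T11 T20 T21 \<tau> U1 U2 "Suc n"]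
      test1 test2 mass stiffness[OF lin(2,4)] stiffness[OF lin(1,3)]
    unfolding Suc_eq_plus1[symmetric] by linarith
qed

lemma inner_le_gamma_const:
  fixes T1 :: "'v1 \<Rightarrow> 'h::real_inner" and T2 :: "'v2 \<Rightarrow> 'h"
  shows "inner (T1 W1) (T2 W2) \<le> gamma_const T1 T2 * (norm (T1 W1) * norm (T2 W2))"
proof (cases "T1 W1 = 0 \<or> T2 W2 = 0")
  case True
  then show ?thesis by auto
next
  case False
  let ?cos = "\<lambda>W1 W2. inner (T1 W1) (T2 W2) / (norm (T1 W1) * norm (T2 W2))"
  have "bdd_above {?cos W1 W2 | W1 W2. T1 W1 \<noteq> 0 \<and> T2 W2 \<noteq> 0}"
    by (rule bdd_aboveI[of _ 1]) (auto simp: divide_le_eq_1 norm_cauchy_schwarz)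
  then have "?cos W1 W2 \<le> gamma_const T1 T2"
    unfolding gamma_const_def using False by (intro cSup_upper) auto
  moreover have "0 < norm (T1 W1) * norm (T2 W2)"
    using False by simp
  ultimately show ?thesis
    by (simp add: pos_divide_le_eq)
qed

lemma neg_inner_le_gamma_const:
  fixes T1 :: "'v1::real_vector \<Rightarrow> 'h::real_inner" and T2 :: "'v2 \<Rightarrow> 'h"
  assumes "linear T1"
  shows "- inner (T1 W1) (T2 W2) \<le> gamma_const T1 T2 * (norm (T1 W1) * norm (T2 W2))"
  using inner_le_gamma_const[of T1 "- W1" T2 W2] by (simp add: linear_neg[OF assms])

lemma norm_add_power2_ge:
  fixes x y :: "'h::real_inner"
  assumes "- inner x y \<le> g * (norm x * norm y)"
  shows "(1 - g\<^sup>2) * (norm y)\<^sup>2 \<le> (norm (x + y))\<^sup>2"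
proof -
  have "(norm (x + y))\<^sup>2 = (norm x)\<^sup>2 + 2 * inner x y + (norm y)\<^sup>2"
    by (simp add: power2_norm_eq_inner inner_add_left inner_add_right inner_commute)
  also have "\<dots> = (norm x - g * norm y)\<^sup>2 + (1 - g\<^sup>2) * (norm y)\<^sup>2
      + 2 * (inner x y + g * (norm x * norm y))"
    by (simp add: power2_eq_square algebra_simps)
  finally show ?thesis
    using assms by (smt (verit) zero_le_power2)
qed

lemma energy2_nonneg:
  fixes a :: "'h::real_inner \<Rightarrow> 'h \<Rightarrow> real"
    and T10 T11 :: "'v1::real_vector \<Rightarrow> 'h" and T20 T21 :: "'v2::real_vector \<Rightarrow> 'h"
    and U1 :: "nat \<Rightarrow> 'v1" and U2 :: "nat \<Rightarrow> 'v2"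
  defines "g \<equiv> gamma_const (\<lambda>W. T10 W + T11 W) (\<lambda>W. T20 W + T21 W)"
  assumes a: "bilinear a" and a_sym: "\<And>u v. a u v = a v u" and a_nonneg: "\<And>u. a u u \<ge> 0"
    and lin: "linear T10" "linear T11" "linear T20" "linear T21"
    and tau: "\<tau> \<noteq> 0"
    and cfl: "\<And>W. \<tau>\<^sup>2 * (bform a T21 T21 W W + bform a T20 T20 W W)
      \<le> 2 * (1 - g\<^sup>2) * bform inner (\<lambda>W. T20 W + T21 W) (\<lambda>W. T20 W + T21 W) W W"
  shows "0 \<le> energy2 a T10 T11 T20 T21 \<tau> U1 U2 n"
proof -
  define D1 where "D1 = U1 (n + 1) - U1 n"
  define D2 where "D2 = U2 (n + 1) - U2 n"
  define x where "x = T10 D1 + T11 D1"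
  define y where "y = T20 D2 + T21 D2"
  let ?k22 = "a (T21 D2) (T21 D2) + a (T20 D2) (T20 D2)"
  have "- inner x y \<le> g * (norm x * norm y)"
    unfolding x_def y_def g_def using lin by (intro neg_inner_le_gamma_const linear_compose_add)
  then have "(1 - g\<^sup>2) * (norm y)\<^sup>2 \<le> (norm (x + y))\<^sup>2"
    by (rule norm_add_power2_ge)
  moreover have "\<tau>\<^sup>2 * ?k22 \<le> 2 * (1 - g\<^sup>2) * (norm y)\<^sup>2"
    using cfl[of D2] by (simp add: bform_def power2_norm_eq_inner y_def)
  ultimately have "\<tau>\<^sup>2 * (1/2 * ?k22) \<le> (norm (x + y))\<^sup>2"
    by linarith
  then have kinetic: "1/2 * ?k22 \<le> 1 / \<tau>\<^sup>2 * (norm (x + y))\<^sup>2"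
    using tau by (simp add: pos_le_divide_eq mult.commute)
  have "- 1/2 * a (T21 D2) (T21 D2)
      \<le> staggered_energy a (T11 (U1 (n + 1))) (T11 (U1 n)) (T21 (U2 n)) (T21 (U2 (n + 1)))"
    "- 1/2 * a (T20 D2) (T20 D2)
      \<le> staggered_energy a (T10 (U1 (n + 1))) (T10 (U1 n)) (T20 (U2 n)) (T20 (U2 (n + 1)))"
    using staggered_energy_ge[OF a a_sym a_nonneg] by (simp_all add: D2_def lin[THEN linear_diff])
  with kinetic show ?thesis
    unfolding energy2_eq x_def y_def D1_def D2_def by argo
qed

theorem theorem3:
  fixes a :: "'h::real_inner \<Rightarrow> 'h \<Rightarrow> real"
    and T10 T11 :: "'v1::euclidean_space \<Rightarrow> 'h"
    and T20 T21 :: "'v2::euclidean_space \<Rightarrow> 'h"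
    and \<tau> :: real
    and U1 :: "nat \<Rightarrow> 'v1" and U2 :: "nat \<Rightarrow> 'v2"
  assumes a_bilinear: "bilinear a"
    and a_sym: "\<And>u v. a u v = a v u"
    and a_nonneg: "\<And>u. a u u \<ge> 0"
    and lin: "linear T10" "linear T11" "linear T20" "linear T21"
    and tau_pos: "\<tau> > 0"
    and gamma: "0 < gamma_const (\<lambda>W. T10 W + T11 W) (\<lambda>W. T20 W + T21 W)"
               "gamma_const (\<lambda>W. T10 W + T11 W) (\<lambda>W. T20 W + T21 W) < 1"
    and cfl: "\<And>W. W \<noteq> 0 \<Longrightarrow>
       \<tau>^2 * (bform a T21 T21 W W + bform a T20 T20 W W)
         \<le> 2 * (1 - (gamma_const (\<lambda>W. T10 W + T11 W) (\<lambda>W. T20 W + T21 W))^2)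
             * bform inner (\<lambda>W. T20 W + T21 W) (\<lambda>W. T20 W + T21 W) W W"
    and scheme: "scheme2 a T10 T11 T20 T21 \<tau> U1 U2"
  shows "(\<forall>n\<ge>1. energy2 a T10 T11 T20 T21 \<tau> U1 U2 n = energy2 a T10 T11 T20 T21 \<tau> U1 U2 (n-1))
       \<and> (\<forall>n. energy2 a T10 T11 T20 T21 \<tau> U1 U2 n \<ge> 0)"
proof -
  have cfl_all: "\<tau>\<^sup>2 * (bform a T21 T21 W W + bform a T20 T20 W W)
      \<le> 2 * (1 - (gamma_const (\<lambda>W. T10 W + T11 W) (\<lambda>W. T20 W + T21 W))\<^sup>2)
        * bform inner (\<lambda>W. T20 W + T21 W) (\<lambda>W. T20 W + T21 W) W W" for W
    using cfl[of W]
    by (cases "W = 0") (simp_all add: bform_def lin[THEN linear_0] bilinear_lzero[OF a_bilinear])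
  have "energy2 a T10 T11 T20 T21 \<tau> U1 U2 (Suc n) = energy2 a T10 T11 T20 T21 \<tau> U1 U2 n" for n
    using energy2_Suc[OF a_bilinear a_sym lin scheme] .
  moreover have "0 \<le> energy2 a T10 T11 T20 T21 \<tau> U1 U2 n" for n
    using energy2_nonneg[OF a_bilinear a_sym a_nonneg lin _ cfl_all] tau_pos by simp
  ultimately show ?thesis
    by (metis Suc_diff_1 less_le_trans zero_less_one)
qed

end
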